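(* Let $G$ be an optimal digraph with $\beta_G > \alpha_G$. For every augmenting sequence $v_1, f_1, v_2, f_2, \dots, f_k, v_{k+1}$ in $G$, we have $v_i \neq v_j$ for all $i \neq j$, except possibly $v_{k+1} = v_1$.
   Context: Digraphs are finite, loopless, with at most one edge $uv$ per ordered pair. A digraph is $2$-free if no distinct $u,v$ have both $uv,vu$ as edges. A circular interval digraph is a digraph together with a fixed arrangement of its vertices in a circle such that for all distinct $u,v,w$ in clockwise order with $uw\in E(G)$, also $uv,vw\in E(G)$. For distinct $u,v$, $d(u,v) = 1 + |\{w: u,w,v \text{ distinct, in clockwise order}\}|$; this is the length of the ordered pair $uv$. A non-edge is an ordered pair $(u,v)$ of distinct vertices with neither $uv$ nor $vu$ an edge; its length is $d(u,v)$. $\alpha_G$ is the minimum length of a non-edge ($\infty$ if none) and $\beta_G$ the maximum length of an edge ($0$ if none). A longest edge is an edge of length $\beta_G$; a shortest non-edge is a non-edge of length $\alpha_G$; an extreme pair is a longest edge or a shortest non-edge. An alternating sequence is a sequence $v_1,f_1,v_2,\dots,f_k,v_{k+1}$ ($k\ge1$) of vertices $v_i$ and extreme pairs $f_i=(v_i,v_{i+1})$ such that the $f_i$ are pairwise distinct, and for $1\le i\le k-1$, if $f_i$ is an edge then $f_{i+1}$ is a non-edge, and if $f_i$ is a non-edge then $f_{i+1}$ is an edge. An augmenting sequence is a maximal alternating sequence (one that cannot be extended at either end to a longer alternating sequence). $\xi(G)$ is the number of pairs $(uv,(w,x))$ with $uv\in E(G)$, $(w,x)$ a non-edge, $d(u,v)>d(w,x)$.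 $\tilde P_3(G)$ is the number of triples $(a,b,c)$ of distinct vertices with $ab,bc\in E(G)$ and $ac,ca\notin E(G)$. For fixed $n\ge 4$, $G$ is optimal if it is a $2$-free circular interval digraph on $n$ vertices maximizing $\tilde P_3$ among all such digraphs and, subject to this, minimizing $\xi(G)$. *)

theory Defs
  imports Main "HOL-Library.Extended_Nat"
begin

text \<open>Vertices of a digraph on n vertices are 0,...,n-1, arranged clockwise in
increasing order around the circle. A digraph is an edge predicate E.\<close>

definition is_digraph :: "nat \<Rightarrow> (nat \<Rightarrow> nat \<Rightarrow> bool) \<Rightarrow> bool" where
  "is_digraph n E \<longleftrightarrow> (\<forall>u v. E u v \<longrightarrow> u < n \<and> v < n \<and> u \<noteq> v)"

definition two_free :: "nat \<Rightarrow> (nat \<Rightarrow> nat \<Rightarrow> bool) \<Rightarrow> bool" where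
  "two_free n E \<longleftrightarrow> (\<forall>u<n. \<forall>v<n. u \<noteq> v \<longrightarrow> \<not> (E u v \<and> E v u))"

definition clockwise :: "nat \<Rightarrow> nat \<Rightarrow> nat \<Rightarrow> nat \<Rightarrow> bool" where
  "clockwise n u v w \<longleftrightarrow> u < n \<and> v < n \<and> w < n \<and> u \<noteq> v \<and> v \<noteq> w \<and> u \<noteq> w \<and>
     (v + n - u) mod n < (w + n - u) mod n"

definition circ_interval :: "nat \<Rightarrow> (nat \<Rightarrow> nat \<Rightarrow> bool) \<Rightarrow> bool" where
  "circ_interval n E \<longleftrightarrow> is_digraph n E \<and>
     (\<forall>u v w. clockwise n u v w \<and> E u w \<longrightarrow> E u v \<and> E v w)"

definition dlen :: "nat \<Rightarrow> nat \<Rightarrow> nat \<Rightarrow> nat" where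
  "dlen n u v = 1 + card {w. w < n \<and> clockwise n u w v}"

definition nonedge :: "nat \<Rightarrow> (nat \<Rightarrow> nat \<Rightarrow> bool) \<Rightarrow> nat \<Rightarrow> nat \<Rightarrow> bool" where
  "nonedge n E u v \<longleftrightarrow> u < n \<and> v < n \<and> u \<noteq> v \<and> \<not> E u v \<and> \<not> E v u"

definition alphaG :: "nat \<Rightarrow> (nat \<Rightarrow> nat \<Rightarrow> bool) \<Rightarrow> enat" where
  "alphaG n E = (if \<exists>u v. nonedge n E u v
      then enat (Min {dlen n u v | u v. nonedge n E u v}) else \<infinity>)"

definition betaG :: "nat \<Rightarrow> (nat \<Rightarrow> nat \<Rightarrow> bool) \<Rightarrow> nat" where
  "betaG n E = (if \<exists>u v. E u v then Max {dlen n u v | u v. E u v} else 0)"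

definition longest_edge :: "nat \<Rightarrow> (nat \<Rightarrow> nat \<Rightarrow> bool) \<Rightarrow> nat \<Rightarrow> nat \<Rightarrow> bool" where
  "longest_edge n E u v \<longleftrightarrow> E u v \<and> dlen n u v = betaG n E"

definition shortest_nonedge :: "nat \<Rightarrow> (nat \<Rightarrow> nat \<Rightarrow> bool) \<Rightarrow> nat \<Rightarrow> nat \<Rightarrow> bool" where
  "shortest_nonedge n E u v \<longleftrightarrow> nonedge n E u v \<and> enat (dlen n u v) = alphaG n E"

definition extreme :: "nat \<Rightarrow> (nat \<Rightarrow> nat \<Rightarrow> bool) \<Rightarrow> nat \<Rightarrow> nat \<Rightarrow> bool" where
  "extreme n E u v \<longleftrightarrow> longest_edge n E u v \<or> shortest_nonedge n E u v"

text \<open>An alternating sequence v_1,f_1,...,f_k,v_{k+1} is encoded by the vertex list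
vs = [v_1,...,v_{k+1}] (k = length vs - 1 \<ge> 1); f_i = (v_i, v_{i+1}).\<close>
definition alternating :: "nat \<Rightarrow> (nat \<Rightarrow> nat \<Rightarrow> bool) \<Rightarrow> nat list \<Rightarrow> bool" where
  "alternating n E vs \<longleftrightarrow> length vs \<ge> 2 \<and>
     (\<forall>i. i + 1 < length vs \<longrightarrow> extreme n E (vs ! i) (vs ! (i + 1))) \<and>
     distinct (map (\<lambda>i. (vs ! i, vs ! (i + 1))) [0..<length vs - 1]) \<and>
     (\<forall>i. i + 2 < length vs \<longrightarrow>
        (E (vs ! i) (vs ! (i + 1)) \<longrightarrow> nonedge n E (vs ! (i + 1)) (vs ! (i + 2))) \<and>
        (nonedge n E (vs ! i) (vs ! (i + 1)) \<longrightarrow> E (vs ! (i + 1)) (vs ! (i + 2))))"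

definition augmenting :: "nat \<Rightarrow> (nat \<Rightarrow> nat \<Rightarrow> bool) \<Rightarrow> nat list \<Rightarrow> bool" where
  "augmenting n E vs \<longleftrightarrow> alternating n E vs \<and>
     \<not> (\<exists>xs ys. xs @ ys \<noteq> [] \<and> alternating n E (xs @ vs @ ys))"

definition xi :: "nat \<Rightarrow> (nat \<Rightarrow> nat \<Rightarrow> bool) \<Rightarrow> nat" where
  "xi n E = card {((u, v), (w, x)). E u v \<and> nonedge n E w x \<and> dlen n u v > dlen n w x}"

definition P3t :: "nat \<Rightarrow> (nat \<Rightarrow> nat \<Rightarrow> bool) \<Rightarrow> nat" where
  "P3t n E = card {(a, b, c). a < n \<and> b < n \<and> c < n \<and> a \<noteq> b \<and> b \<noteq> c \<and> a \<noteq> c \<and>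
      E a b \<and> E b c \<and> \<not> E a c \<and> \<not> E c a}"

definition admissible :: "nat \<Rightarrow> (nat \<Rightarrow> nat \<Rightarrow> bool) \<Rightarrow> bool" where
  "admissible n E \<longleftrightarrow> circ_interval n E \<and> two_free n E"

definition optimal :: "nat \<Rightarrow> (nat \<Rightarrow> nat \<Rightarrow> bool) \<Rightarrow> bool" where
  "optimal n E \<longleftrightarrow> admissible n E \<and>
     (\<forall>E'. admissible n E' \<longrightarrow> P3t n E' \<le> P3t n E) \<and>
     (\<forall>E'. admissible n E' \<and> P3t n E' = P3t n E \<longrightarrow> xi n E \<le> xi n E')"

end

theory Submission
  imports Defs
begin

(* Only two features of an optimal digraph G with beta_G > alpha_G are
   needed: G is a circular interval digraph, and every shortest non-edge is strictly
   shorter than every longest edge.  From these we show that the relation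
   "(u,v) is an extreme pair" is a partial injection on vertices: two extreme pairs
   with a common tail, or with a common head, coincide.  (Two extreme pairs of the same
   kind from u have the same length, hence the same head; a longest edge uv and a
   shortest non-edge uw from u are impossible, since w would lie strictly inside the
   clockwise interval from u to v, forcing uw to be an edge; heads are symmetric.)
   An alternating sequence is a walk along this partial injection using pairwise
   distinct steps, and such a walk can repeat no vertex except by closing up at its
   end. *)

definition offset :: "nat \<Rightarrow> nat \<Rightarrow> nat \<Rightarrow> nat" where
  "offset n u v = (v + n - u) mod n"

lemma offset_eq:
  assumes "u < n" "v < n"
  shows "offset n u v = (if u \<le> v then v - u else v + n - u)"
  using assms by (auto simp: offset_def le_mod_geq)

lemma clockwise_offset:
  "clockwise n u w v \<longleftrightarrow>
     u < n \<and> w < n \<and> v < n \<and> u \<noteq> w \<and> w \<noteq> v \<and> u \<noteq> v \<and> offset n u w < offset n u v"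
  unfolding clockwise_def offset_def by auto

lemma offset_lt: "u < n \<Longrightarrow> v < n \<Longrightarrow> offset n u v < n"
  by (simp add: offset_def)

lemma offset_self [simp]: "offset n u u = 0"
  by (simp add: offset_def)

lemma offset_pos: "u < n \<Longrightarrow> v < n \<Longrightarrow> u \<noteq> v \<Longrightarrow> 0 < offset n u v"
  by (auto simp: offset_eq)

lemma offset_inj_head:
  "u < n \<Longrightarrow> v < n \<Longrightarrow> w < n \<Longrightarrow> offset n u v = offset n u w \<Longrightarrow> v = w"
  by (auto simp: offset_eq split: if_splits)

lemma offset_inj_tail:
  "u < n \<Longrightarrow> v < n \<Longrightarrow> w < n \<Longrightarrow> offset n u w = offset n v w \<Longrightarrow> u = v"
  by (auto simp: offset_eq split: if_splits)

lemma inj_on_offset: "u < n \<Longrightarrow> inj_on (offset n u) {..<n}"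
  by (rule inj_onI) (simp add: offset_inj_head)

lemma offset_image: "u < n \<Longrightarrow> offset n u ` {..<n} = {..<n}"
  by (rule endo_inj_surj) (auto simp: inj_on_offset offset_lt)

(* The length d(u,v) is the clockwise offset: the vertices strictly between u and v
   are exactly those at offsets 1, ..., offset n u v - 1 from u. *)
lemma dlen_offset:
  assumes "u < n" "v < n" "u \<noteq> v"
  shows "dlen n u v = offset n u v"
proof -
  let ?S = "{w. w < n \<and> clockwise n u w v}"
  have image: "offset n u ` ?S = {0<..<offset n u v}"
  proof
    show "offset n u ` ?S \<subseteq> {0<..<offset n u v}"
      using assms by (auto simp: clockwise_offset offset_pos)
  next
    show "{0<..<offset n u v} \<subseteq> offset n u ` ?S"
    proof
      fix k assume k: "k \<in> {0<..<offset n u v}"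
      then have "k < n" using offset_lt[OF assms(1,2)] by auto
      then obtain w where w: "w < n" "k = offset n u w"
        using offset_image[OF assms(1)] by (metis imageE lessThan_iff)
      then have "w \<in> ?S" using k assms by (auto simp: clockwise_offset)
      then show "k \<in> offset n u ` ?S" using w by blast
    qed
  qed
  have "inj_on (offset n u) ?S"
    by (rule inj_on_subset[OF inj_on_offset[OF assms(1)]]) auto
  then have "card ?S = card (offset n u ` ?S)" by (simp add: card_image)
  also have "\<dots> = offset n u v - 1" by (simp add: image)
  finally have "card ?S = offset n u v - 1" .
  moreover have "offset n u v > 0" using assms by (rule offset_pos)
  ultimately show ?thesis by (simp add: dlen_def)
qed

lemma offset_nested:
  "u < n \<Longrightarrow> v < n \<Longrightarrow> w < n \<Longrightarrow> u \<noteq> v \<Longrightarrow> v \<noteq> w \<Longrightarrow> u \<noteq> w \<Longrightarrow>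
   offset n v w < offset n u w \<Longrightarrow> offset n u v < offset n u w"
  by (auto simp: offset_eq split: if_splits)

lemma extreme_vertices:
  assumes "is_digraph n E" "extreme n E u v"
  shows "u < n" "v < n" "u \<noteq> v"
  using assms
  by (auto simp: extreme_def longest_edge_def shortest_nonedge_def nonedge_def is_digraph_def)

lemma shortest_nonedge_shorter:
  assumes "alphaG n E < enat (betaG n E)"
    and "longest_edge n E u v" and "shortest_nonedge n E w x"
  shows "dlen n w x < dlen n u v"
  using assms unfolding longest_edge_def shortest_nonedge_def by (metis enat_ord_simps(2))

lemma extreme_kind:
  assumes "extreme n E u v"
  shows "E u v \<longleftrightarrow> longest_edge n E u v" "\<not> E u v \<longleftrightarrow> shortest_nonedge n E u v"
  using assms by (auto simp: extreme_def longest_edge_def shortest_nonedge_def nonedge_def)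

lemma extreme_same_kind_dlen:
  assumes "extreme n E u v" "extreme n E w x" "E u v \<longleftrightarrow> E w x"
  shows "dlen n u v = dlen n w x"
proof (cases "E u v")
  case True
  then have "longest_edge n E u v" "longest_edge n E w x"
    using assms(3) extreme_kind(1)[OF assms(1)] extreme_kind(1)[OF assms(2)] by simp_all
  then show ?thesis by (simp add: longest_edge_def)
next
  case False
  then have "shortest_nonedge n E u v" "shortest_nonedge n E w x"
    using assms(3) extreme_kind(2)[OF assms(1)] extreme_kind(2)[OF assms(2)] by simp_all
  then have "enat (dlen n u v) = enat (dlen n w x)" by (simp add: shortest_nonedge_def)
  then show ?thesis by simp
qed

lemma circ_interval_inside:
  assumes "circ_interval n E" "clockwise n u v w" "E u w"
  shows "E u v" "E v w"
  using assms unfolding circ_interval_def by blast+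

(* In a circular interval digraph, a shortest non-edge cannot share its tail with a
   longer longest edge: its head would lie inside the edge's interval. *)
lemma no_mixed_tail:
  assumes ci: "circ_interval n E" and ab: "alphaG n E < enat (betaG n E)"
    and le: "longest_edge n E u v" and sn: "shortest_nonedge n E u w"
  shows False
proof -
  have dg: "is_digraph n E" using ci by (simp add: circ_interval_def)
  have ext: "extreme n E u v" "extreme n E u w" using le sn by (simp_all add: extreme_def)
  note uv = extreme_vertices[OF dg ext(1)] and uw = extreme_vertices[OF dg ext(2)]
  have "offset n u w < offset n u v"
    using shortest_nonedge_shorter[OF ab le sn] uv uw by (simp add: dlen_offset)
  then have "clockwise n u w v" using uv uw by (auto simp: clockwise_offset)
  then have "E u w" using circ_interval_inside(1)[OF ci] le by (simp add: longest_edge_def)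
  then show False using sn by (simp add: shortest_nonedge_def nonedge_def)
qed

lemma no_mixed_head:
  assumes ci: "circ_interval n E" and ab: "alphaG n E < enat (betaG n E)"
    and le: "longest_edge n E u w" and sn: "shortest_nonedge n E v w"
  shows False
proof -
  have dg: "is_digraph n E" using ci by (simp add: circ_interval_def)
  have ext: "extreme n E u w" "extreme n E v w" using le sn by (simp_all add: extreme_def)
  note uw = extreme_vertices[OF dg ext(1)] and vw = extreme_vertices[OF dg ext(2)]
  have shorter: "offset n v w < offset n u w"
    using shortest_nonedge_shorter[OF ab le sn] uw vw by (simp add: dlen_offset)
  then have "u \<noteq> v" by auto
  then have "offset n u v < offset n u w"
    using offset_nested[OF uw(1) vw(1) uw(2) _ vw(3) uw(3) shorter] by simp
  then have "clockwise n u v w" using \<open>u \<noteq> v\<close> uw vw by (auto simp: clockwise_offset)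
  then have "E v w" using circ_interval_inside(2)[OF ci] le by (simp add: longest_edge_def)
  then show False using sn by (simp add: shortest_nonedge_def nonedge_def)
qed

lemma extreme_same_kind:
  assumes ci: "circ_interval n E" and ab: "alphaG n E < enat (betaG n E)"
    and e: "extreme n E u v" "extreme n E w x" and common: "u = w \<or> v = x"
  shows "E u v \<longleftrightarrow> E w x"
proof -
  have "\<not> (longest_edge n E a b \<and> shortest_nonedge n E c d)"
    if "a = c \<or> b = d" for a b c d
    using that no_mixed_tail[OF ci ab] no_mixed_head[OF ci ab] by blast
  then show ?thesis using common extreme_kind[OF e(1)] extreme_kind[OF e(2)] by metis
qed

lemma extreme_head_unique:
  assumes ci: "circ_interval n E" and ab: "alphaG n E < enat (betaG n E)"
    and e: "extreme n E u v" "extreme n E u w"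
  shows "v = w"
proof -
  have dg: "is_digraph n E" using ci by (simp add: circ_interval_def)
  have "dlen n u v = dlen n u w"
    using extreme_same_kind_dlen[OF e extreme_same_kind[OF ci ab e]] by simp
  then show ?thesis
    using extreme_vertices[OF dg e(1)] extreme_vertices[OF dg e(2)] offset_inj_head[of u n v w]
    by (simp add: dlen_offset)
qed

lemma extreme_tail_unique:
  assumes ci: "circ_interval n E" and ab: "alphaG n E < enat (betaG n E)"
    and e: "extreme n E u w" "extreme n E v w"
  shows "u = v"
proof -
  have dg: "is_digraph n E" using ci by (simp add: circ_interval_def)
  have "dlen n u w = dlen n v w"
    using extreme_same_kind_dlen[OF e extreme_same_kind[OF ci ab e]] by simp
  then show ?thesis
    using extreme_vertices[OF dg e(1)] extreme_vertices[OF dg e(2)] offset_inj_tail[of u n v w]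
    by (simp add: dlen_offset)
qed

(* A repeated
   vertex vs!i = vs!j (i < j) yields a repeated step: the outgoing steps at i and j
   if j is not the last position, otherwise the incoming steps (then i > 0). *)
lemma walk_vertices_distinct:
  fixes R :: "'a \<Rightarrow> 'a \<Rightarrow> bool" and vs :: "'a list"
  assumes step: "\<And>k. k + 1 < length vs \<Longrightarrow> R (vs ! k) (vs ! (k + 1))"
    and right_unique: "\<And>a b c. R a b \<Longrightarrow> R a c \<Longrightarrow> b = c"
    and left_unique: "\<And>a b c. R a c \<Longrightarrow> R b c \<Longrightarrow> a = b"
    and distinct_steps: "distinct (map (\<lambda>k. (vs ! k, vs ! (k + 1))) [0..<length vs - 1])"
    and ij: "i < j" "j < length vs" "\<not> (i = 0 \<and> j = length vs - 1)"
  shows "vs ! i \<noteq> vs ! j"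
proof
  assume eq: "vs ! i = vs ! j"
  have steps_differ: "(vs ! a, vs ! (a + 1)) \<noteq> (vs ! b, vs ! (b + 1))"
    if "a < b" "b + 1 < length vs" for a b
    using distinct_steps that by (simp add: distinct_conv_nth)
  show False
  proof (cases "j + 1 < length vs")
    case True
    then have "vs ! (i + 1) = vs ! (j + 1)"
      using right_unique step[of i] step[of j] eq ij by simp
    then show False using steps_differ[OF ij(1) True] eq by simp
  next
    case False
    then have "0 < i" using ij by auto
    have "R (vs ! (i - 1)) (vs ! (i - 1 + 1))" "R (vs ! (j - 1)) (vs ! (j - 1 + 1))"
      using step[of "i - 1"] step[of "j - 1"] \<open>0 < i\<close> ij by auto
    then have "R (vs ! (i - 1)) (vs ! i)" "R (vs ! (j - 1)) (vs ! j)"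
      using \<open>0 < i\<close> ij by simp_all
    then have "vs ! (i - 1) = vs ! (j - 1)" using left_unique eq by metis
    moreover have "vs ! (i - 1 + 1) = vs ! (j - 1 + 1)" using eq \<open>0 < i\<close> ij by simp
    ultimately have same: "(vs ! (i - 1), vs ! (i - 1 + 1)) = (vs ! (j - 1), vs ! (j - 1 + 1))"
      by simp
    have "i - 1 < j - 1" "j - 1 + 1 < length vs" using \<open>0 < i\<close> ij by auto
    from steps_differ[OF this] same show False by contradiction
  qed
qed

theorem mainTheorem13:
  fixes n :: nat and E :: "nat \<Rightarrow> nat \<Rightarrow> bool" and vs :: "nat list"
  assumes "4 \<le> n"
    and "optimal n E"
    and "alphaG n E < enat (betaG n E)"
    and "augmenting n E vs"
  shows "\<forall>i j. i < j \<and> j < length vs \<and> \<not> (i = 0 \<and> j = length vs - 1) \<longrightarrow> vs ! i \<noteq> vs ! j"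
proof (intro allI impI)
  fix i j assume ij: "i < j \<and> j < length vs \<and> \<not> (i = 0 \<and> j = length vs - 1)"
  have ci: "circ_interval n E" using assms(2) by (simp add: optimal_def admissible_def)
  have alt: "alternating n E vs" using assms(4) by (simp add: augmenting_def)
  show "vs ! i \<noteq> vs ! j"
  proof (rule walk_vertices_distinct[where R = "extreme n E"])
    show "\<And>k. k + 1 < length vs \<Longrightarrow> extreme n E (vs ! k) (vs ! (k + 1))"
      using alt by (simp add: alternating_def)
    show "distinct (map (\<lambda>k. (vs ! k, vs ! (k + 1))) [0..<length vs - 1])"
      using alt by (simp add: alternating_def)
    show "\<And>a b c. extreme n E a b \<Longrightarrow> extreme n E a c \<Longrightarrow> b = c"
      using extreme_head_unique[OF ci assms(3)] .
    show "\<And>a b c. extreme n E a c \<Longrightarrow> extreme n E b c \<Longrightarrow> a = b"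
      using extreme_tail_unique[OF ci assms(3)] .
  qed (use ij in auto)
qed

end
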